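(* For every odd $N\ge3$ we have ${}'\mathcal X^-_{N-2}={}^\sharp\mathcal X^-_{N-2}$.
   Context: For an odd integer $M\ge3$ the following objects are defined (we write $[i,j]=\{h\in\mathbb Z:i\le h\le j\}$, empty if $i>j$). A $2$-element subset $\{i,j\}\subseteq[1,M]$ is written $ij$ when either ($i<j$ and $j-i$ odd) or ($i>j$ and $i-j$ even); each $2$-element subset has exactly one such writing. Let $\mathcal P_M$ be the set of all finite sets $B$ of pairwise disjoint $2$-element subsets of $[1,M]$; for $B\in\mathcal P_M$ let $B^0=\{\{i,j\}\in B: i-j\text{ even}\}$, $B^1=\{\{i,j\}\in B: i-j\text{ odd}\}$. A set $X\subseteq[1,M]$ is $0$-covered by $B^1$ if there are $a_1b_1,\dots,a_sb_s\in B^1$ ($s\ge0$, so $a_r<b_r$) with $X=[a_1,b_1]\sqcup\dots\sqcup[a_s,b_s]$ (disjoint union). Let ${}^*\mathcal P_M$ be the set of $B\in\mathcal P_M$ such that: for every $ij\in B^1$, $[i+1,j-1]$ is $0$-covered by $B^1$; and there is a sequence $(i_1,\dots,i_{2s})$ in $[1,M]$ with $B^0=\{i_{2s}i_1,i_{2s-1}i_2,\dots,i_{s+1}i_s\}$ ($s=|B^0|$; unique) such that, if $s\ge1$, each of $[i_1+1,i_2-1],\dots,[i_{s-1}+1,i_s-1],[i_{s+1}+1,i_{s+2}-1],\dots,[i_{2s-1}+1,i_{2s}-1]$ is $0$-covered by $B^1$. Let $\mathcal X^-_{M-2}$ be the set of $B\in{}^*\mathcal P_M$ such that: either $s=0$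 or both $[1,i_1-1]$ and $[i_{2s}+1,M]$ are $0$-covered by $B^1$; and if $s$ is even then $\{i,M\}\in B$ for some even $i$, if $s$ is odd then $\{i,M\}\in B$ for some odd $i$. Let ${}'\mathcal X^-_{M-2}$ be the set of $B\in\mathcal X^-_{M-2}$ with $|B^0|$ even (equivalently, $\{i,M\}\in B$ for some even $i$). For odd $M\ge5$ and $k\in[1,M-1]$ let $\iota_k:[1,M-2]\to[1,M]$ be $\iota_k(i)=i$ for $i<k$ and $\iota_k(i)=i+2$ for $i\ge k$, and let $I_k:\mathcal P_{M-2}\to\mathcal P_M$ send $B$ to $\{\{\iota_k(a),\iota_k(b)\}:\{a,b\}\in B\}\cup\{\{k,k+1\}\}$. Let ${}'Pr^-_{M-2}\subseteq\mathcal P_M$ consist of $\{\{M-1,M\}\}$ and of the sets $\{\{M-1,M\},\{M-2,1\},\{M-3,2\},\dots,\{M-1-\tau,\tau\}\}$ for even $\tau\in[2,(M-3)/2]$. Define ${}^\sharp\mathcal X^-_{M-2}\subseteq\mathcal P_M$ recursively: ${}^\sharp\mathcal X^-_1=\{\{\{2,3\}\}\}\subseteq\mathcal P_3$; for $M\ge5$, $B\in\mathcal P_M$ lies in ${}^\sharp\mathcal X^-_{M-2}$ iff either $B\in{}'Pr^-_{M-2}$ or $B=I_k(B')$ for some $B'\in{}^\sharp\mathcal X^-_{M-4}$ and $k\in[1,M-2]$. *)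

theory Defs
  imports Main
begin

definition PM :: "nat \<Rightarrow> nat set set set" where
  "PM M = {B. finite B \<and> (\<forall>p\<in>B. p \<subseteq> {1..M} \<and> card p = 2)
                \<and> (\<forall>p\<in>B. \<forall>q\<in>B. p \<noteq> q \<longrightarrow> p \<inter> q = {})}"

definition B0 :: "nat set set \<Rightarrow> nat set set" where
  "B0 B = {p \<in> B. even (Max p - Min p)}"

definition B1 :: "nat set set \<Rightarrow> nat set set" where
  "B1 B = {p \<in> B. odd (Max p - Min p)}"

definition zero_covered :: "nat set set \<Rightarrow> nat set \<Rightarrow> bool" where
  "zero_covered B X \<longleftrightarrow> (\<exists>S \<subseteq> B1 B.
      (\<forall>p\<in>S. \<forall>q\<in>S. p \<noteq> q \<longrightarrow> {Min p..Max p} \<inter> {Min q..Max q} = {})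
      \<and> X = (\<Union>p\<in>S. {Min p..Max p}))"

text \<open>The sequence (i_1,...,i_{2s}) (increasing, hence unique) with
  B^0 = {i_{2s} i_1, ..., i_{s+1} i_s}.\<close>
definition nest_seq :: "nat set set \<Rightarrow> nat \<Rightarrow> (nat \<Rightarrow> nat) \<Rightarrow> bool" where
  "nest_seq B s i \<longleftrightarrow> strict_mono_on {1..2*s} i
      \<and> B0 B = {{i (2*s + 1 - r), i r} | r. r \<in> {1..s}}"

definition seq_covered :: "nat set set \<Rightarrow> nat \<Rightarrow> (nat \<Rightarrow> nat) \<Rightarrow> bool" where
  "seq_covered B s i \<longleftrightarrow>
      (\<forall>r \<in> {1..<s}. zero_covered B {i r + 1 .. i (r+1) - 1})
    \<and> (\<forall>r \<in> {s+1..<2*s}. zero_covered B {i r + 1 .. i (r+1) - 1})"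

definition starP :: "nat \<Rightarrow> nat set set set" where
  "starP M = {B \<in> PM M.
      (\<forall>p \<in> B1 B. zero_covered B {Min p + 1 .. Max p - 1})
    \<and> (\<exists>i. nest_seq B (card (B0 B)) i \<and> seq_covered B (card (B0 B)) i)}"

text \<open>Xminus M is the set called X^-_{M-2} in the paper.\<close>
definition Xminus :: "nat \<Rightarrow> nat set set set" where
  "Xminus M = {B \<in> starP M.
      (let s = card (B0 B) in
        (s = 0 \<or> (\<exists>i. nest_seq B s i \<and> zero_covered B {1 .. i 1 - 1}
                              \<and> zero_covered B {i (2*s) + 1 .. M}))
      \<and> (even s \<longrightarrow> (\<exists>j. even j \<and> {j, M} \<in> B))
      \<and> (odd s \<longrightarrow> (\<exists>j. odd j \<and> {j, M} \<in> B)))}"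

text \<open>primeXminus M is the set called 'X^-_{M-2} in the paper.\<close>
definition primeXminus :: "nat \<Rightarrow> nat set set set" where
  "primeXminus M = {B \<in> Xminus M. even (card (B0 B))}"

definition iota :: "nat \<Rightarrow> nat \<Rightarrow> nat" where
  "iota k i = (if i < k then i else i + 2)"

definition Ik :: "nat \<Rightarrow> nat set set \<Rightarrow> nat set set" where
  "Ik k B = {iota k ` p | p. p \<in> B} \<union> {{k, k+1}}"

text \<open>primePr M is the set called 'Pr^-_{M-2} in the paper.\<close>
definition primePr :: "nat \<Rightarrow> nat set set set" where
  "primePr M = {{{M-1, M}}} \<union>
     {{{M-1, M}} \<union> {{M - 1 - r, r} | r. r \<in> {1..\<tau>}} | \<tau>.
        even \<tau> \<and> 2 \<le> \<tau> \<and> \<tau> \<le> (M - 3) div 2}"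

text \<open>sharpX M is the set called #X^-_{M-2} in the paper (relevant for odd M >= 3).\<close>
fun sharpX :: "nat \<Rightarrow> nat set set set" where
  "sharpX M = (if M \<le> 3 then (if M = 3 then {{{2,3}}} else {})
     else primePr M \<union> {Ik k B' | k B'. k \<in> {1..M-2} \<and> B' \<in> sharpX (M - 2)})"

declare sharpX.simps [simp del]

end

(* Inserting the adjacent pair {k, k+1} and shifting every point >= k up by two (the map I_k)
   neither creates nor destroys 0-coverings of intervals that contain both or neither of k, k+1:
   a covering pair straddling k just absorbs k and k+1. So I_k B' lies in 'X^-_{M-2} exactly
   when B' lies in 'X^-_{M-4}, and every member of 'X^-_{M-2} containing an adjacent pair
   {k, k+1} with k <= M-2 arises in this way. A member without such a pair has B^1 = {{M-1, M}}:
   an odd pair of minimal width other than {M-1, M} would contain a narrower odd pair in its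
   0-covered interior. Then every gap of the nesting sequence of B^0 is empty, which forces
   B^0 = {M-2 1, M-3 2, ..., M-1-s s}, one of the configurations of 'Pr^-. Hence 'X^- satisfies
   the recursion defining #X^-, and the two sets agree by induction. *)

theory Submission
  imports Defs
begin

lemma PM_intro:
  assumes "finite B" "\<And>p. p \<in> B \<Longrightarrow> p \<subseteq> {1..M} \<and> card p = 2"
    and "\<And>p q. p \<in> B \<Longrightarrow> q \<in> B \<Longrightarrow> p \<noteq> q \<Longrightarrow> p \<inter> q = {}"
  shows "B \<in> PM M"
  using assms by (simp add: PM_def)

lemma PM_finite_nonempty: "B \<in> PM M \<Longrightarrow> \<forall>p\<in>B. finite p \<and> p \<noteq> {}"
  unfolding PM_def by (auto simp: card_ge_0_finite)

lemma card_2_Min_Max: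
  assumes "card p = 2"
  shows "p = {Min p, Max p} \<and> Min p < Max p"
proof -
  obtain x y where "p = {x, y}" "x \<noteq> y"
    using assms by (auto simp: card_2_iff)
  then show ?thesis
    by (cases "x < y") (auto simp: min_def max_def)
qed

lemma zero_coveredI:
  assumes "S \<subseteq> B1 B"
    and "\<And>p q. p \<in> S \<Longrightarrow> q \<in> S \<Longrightarrow> p \<noteq> q \<Longrightarrow> {Min p..Max p} \<inter> {Min q..Max q} = {}"
    and "X = (\<Union>p\<in>S. {Min p..Max p})"
  shows "zero_covered B X"
  unfolding zero_covered_def using assms by (intro exI[of _ S] conjI ballI impI)

lemma zero_coveredE:
  assumes "zero_covered B X"
  obtains S where "S \<subseteq> B1 B"
    and "\<And>p q. p \<in> S \<Longrightarrow> q \<in> S \<Longrightarrow> p \<noteq> q \<Longrightarrow> {Min p..Max p} \<inter> {Min q..Max q} = {}"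
    and "X = (\<Union>p\<in>S. {Min p..Max p})"
  using assms unfolding zero_covered_def by (elim exE conjE) (rule that; simp)

lemma zero_covered_empty: "zero_covered B {}"
  by (rule zero_coveredI[of "{}"]) auto

lemma zero_covered_pair: "q \<in> B1 B \<Longrightarrow> zero_covered B {Min q..Max q}"
  by (rule zero_coveredI[of "{q}"]) auto

lemma zero_covered_memE:
  assumes "zero_covered B X" "x \<in> X"
  obtains q where "q \<in> B1 B" "x \<in> {Min q..Max q}" "{Min q..Max q} \<subseteq> X"
proof -
  obtain S where "S \<subseteq> B1 B" "X = (\<Union>p\<in>S. {Min p..Max p})"
    using assms(1) by (rule zero_coveredE)
  then show ?thesis
    using assms(2) that by blast
qed

lemma zero_covered_B1_singleton:
  assumes "B1 B = {q}" "zero_covered B X"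
  shows "X = {} \<or> X = {Min q..Max q}"
proof -
  obtain S where "S \<subseteq> B1 B" "X = (\<Union>p\<in>S. {Min p..Max p})"
    using assms(2) by (rule zero_coveredE)
  moreover have "S = {} \<or> S = {q}"
    using \<open>S \<subseteq> B1 B\<close> assms(1) by (simp add: subset_singleton_iff)
  ultimately show ?thesis
    by auto
qed

lemma mem_primeXminus_iff:
  "B \<in> primeXminus M \<longleftrightarrow>
     B \<in> PM M
     \<and> (\<forall>p\<in>B1 B. zero_covered B {Min p + 1..Max p - 1})
     \<and> (\<exists>i. nest_seq B (card (B0 B)) i \<and> seq_covered B (card (B0 B)) i)
     \<and> (card (B0 B) = 0 \<or> (\<exists>i. nest_seq B (card (B0 B)) i \<and> zero_covered B {1..i 1 - 1}
                                \<and> zero_covered B {i (2 * card (B0 B)) + 1..M}))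
     \<and> (\<exists>j. even j \<and> {j, M} \<in> B)
     \<and> even (card (B0 B))"
  unfolding primeXminus_def Xminus_def starP_def Let_def by auto

lemma nest_seq_cong:
  assumes "\<forall>r\<in>{1..2 * s}. i r = j r"
  shows "nest_seq B s i \<longleftrightarrow> nest_seq B s j"
proof -
  have "strict_mono_on {1..2 * s} i \<longleftrightarrow> strict_mono_on {1..2 * s} j"
    using assms by (simp add: strict_mono_on_def)
  moreover have "(\<lambda>r. {i (2 * s + 1 - r), i r}) ` {1..s} = (\<lambda>r. {j (2 * s + 1 - r), j r}) ` {1..s}"
  proof (rule image_cong[OF refl])
    fix r assume "r \<in> {1..s}"
    then have "2 * s + 1 - r \<in> {1..2 * s}" "r \<in> {1..2 * s}"
      by auto
    then show "{i (2 * s + 1 - r), i r} = {j (2 * s + 1 - r), j r}"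
      using assms by simp
  qed
  ultimately show ?thesis
    unfolding nest_seq_def setcompr_eq_image Collect_mem_eq by simp
qed

lemma seq_covered_cong:
  assumes "\<forall>r\<in>{1..2 * s}. i r = j r"
  shows "seq_covered B s i \<longleftrightarrow> seq_covered B s j"
proof -
  have "i r = j r \<and> i (r + 1) = j (r + 1)" if "r \<in> {1..<s} \<or> r \<in> {s + 1..<2 * s}" for r
    using assms that by auto
  then show ?thesis
    unfolding seq_covered_def by auto
qed

lemma Union_B0_nest_seq:
  assumes "nest_seq B s i"
  shows "\<Union>(B0 B) = i ` {1..2 * s}"
proof -
  have "\<Union>(B0 B) = (\<Union>r\<in>{1..s}. {i (2 * s + 1 - r), i r})"
    using assms unfolding nest_seq_def setcompr_eq_image Collect_mem_eq by simp
  also have "\<dots> = i ` ((\<lambda>r. 2 * s + 1 - r) ` {1..s} \<union> {1..s})"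
    by auto
  also have "(\<lambda>r. 2 * s + 1 - r) ` {1..s} \<union> {1..s} = {1..2 * s}"
  proof (intro equalityI subsetI)
    fix r assume "r \<in> {1..2 * s}"
    then show "r \<in> (\<lambda>r. 2 * s + 1 - r) ` {1..s} \<union> {1..s}"
      by (cases "r \<le> s") (auto intro!: image_eqI[of r _ "2 * s + 1 - r"])
  qed auto
  finally show ?thesis .
qed

lemma nest_seq_Min_Max:
  assumes "nest_seq B s i" and "1 \<le> s"
  shows "i 1 = Min (\<Union>(B0 B))" "i (2 * s) = Max (\<Union>(B0 B))"
proof -
  have mono: "strict_mono_on {1..2 * s} i"
    using assms(1) by (simp add: nest_seq_def)
  have range: "i 1 \<le> i r \<and> i r \<le> i (2 * s)" if "r \<in> {1..2 * s}" for r
    using that assms(2) by (auto intro!: strict_mono_on_leD[OF mono])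
  have ends: "1 \<in> {1..2 * s}" "2 * s \<in> {1..2 * s}"
    using assms(2) by auto
  show "i 1 = Min (\<Union>(B0 B))"
    unfolding Union_B0_nest_seq[OF assms(1)]
  proof (rule Min_eqI[symmetric])
    show "i 1 \<le> y" if "y \<in> i ` {1..2 * s}" for y
      using that range by auto
  qed (use ends in auto)
  show "i (2 * s) = Max (\<Union>(B0 B))"
    unfolding Union_B0_nest_seq[OF assms(1)]
  proof (rule Max_eqI[symmetric])
    show "y \<le> i (2 * s)" if "y \<in> i ` {1..2 * s}" for y
      using that range by auto
  qed (use ends in auto)
qed

lemma iota_less_iff [simp]: "iota k x < iota k y \<longleftrightarrow> x < y"
  by (auto simp: iota_def)

lemma iota_le_iff [simp]: "iota k x \<le> iota k y \<longleftrightarrow> x \<le> y"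
  by (auto simp: iota_def)

lemma iota_eq_iff [simp]: "iota k x = iota k y \<longleftrightarrow> x = y"
  by (auto simp: iota_def)

lemma iota_neq [simp]: "iota k x \<noteq> k" "iota k x \<noteq> Suc k"
  by (auto simp: iota_def)

lemma even_iota_iff [simp]: "even (iota k x) \<longleftrightarrow> even x"
  by (auto simp: iota_def)

lemma inj_iota: "inj (iota k)"
  by (auto intro: injI)

lemma mono_iota: "mono (iota k)"
  by (auto intro: monoI)

lemma range_iota: "range (iota k) = - {k, Suc k}"
proof
  show "- {k, Suc k} \<subseteq> range (iota k)"
  proof
    fix z assume "z \<in> - {k, Suc k}"
    then have "z = iota k (if z < k then z else z - 2)"
      by (auto simp: iota_def)
    then show "z \<in> range (iota k)" by blast
  qed
qed auto

lemma Min_image_iota [simp]: "finite p \<Longrightarrow> p \<noteq> {} \<Longrightarrow> Min (iota k ` p) = iota k (Min p)"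
  by (simp add: mono_Min_commute mono_iota)

lemma Max_image_iota [simp]: "finite p \<Longrightarrow> p \<noteq> {} \<Longrightarrow> Max (iota k ` p) = iota k (Max p)"
  by (simp add: mono_Max_commute mono_iota)

lemma odd_iota_diff_iff: "a \<le> b \<Longrightarrow> odd (iota k b - iota k a) \<longleftrightarrow> odd (b - a)"
  by (auto simp: iota_def)

lemma vimage_iota_atLeastAtMost [simp]: "iota k -` {iota k a..iota k b} = {a..b}"
  by auto

lemma image_iota_atLeastAtMost_subset: "iota k ` {1..M - 2} \<subseteq> {1..M}"
  by (auto simp: iota_def)

lemma vimage_iota_atLeastAtMost_1: "1 \<le> k \<Longrightarrow> k < M \<Longrightarrow> iota k -` {1..M} = {1..M - 2}"
  by (auto simp: iota_def split: if_splits)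

lemma vimage_iota_adjacent [simp]: "iota k -` {k, Suc k} = {}" "iota k -` {k..Suc k} = {}"
  by (auto simp: iota_def split: if_splits)

lemma iota_atLeastAtMost_adjacent:
  "k \<in> {iota k a..iota k b} \<longleftrightarrow> a < k \<and> k \<le> b"
  "Suc k \<in> {iota k a..iota k b} \<longleftrightarrow> a < k \<and> k \<le> b"
  by (auto simp: iota_def)

lemma set_eq_iota:
  assumes "iota k -` Y = iota k -` Z" and "Y \<inter> {k, Suc k} = Z \<inter> {k, Suc k}"
  shows "Y = Z"
proof -
  have "Y = iota k ` (iota k -` Y) \<union> (Y \<inter> {k, Suc k})" for Y
    by (auto simp: range_iota)
  then show ?thesis using assms by metis
qed

lemma iota_atLeastAtMost_disjoint:
  assumes "{a..b} \<inter> {c..d} = {}"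
  shows "{iota k a..iota k b} \<inter> {iota k c..iota k d} = {}"
proof (rule set_eq_iota)
  show "iota k -` ({iota k a..iota k b} \<inter> {iota k c..iota k d}) = iota k -` {}"
    using assms by simp
  have "\<not> (a < k \<and> k \<le> b \<and> c < k \<and> k \<le> d)"
    using assms by auto
  then show "{iota k a..iota k b} \<inter> {iota k c..iota k d} \<inter> {k, Suc k} = {} \<inter> {k, Suc k}"
    using iota_atLeastAtMost_adjacent[of k] by blast
qed

section \<open>Inserting an adjacent pair\<close>

lemma mem_Ik_iff: "p \<in> Ik k B \<longleftrightarrow> p = {k, Suc k} \<or> (\<exists>p0\<in>B. p = iota k ` p0)"
  by (auto simp: Ik_def)

lemma Ik_cases [consumes 1, case_names adjacent shifted]:
  assumes "p \<in> Ik k B"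
  obtains "p = {k, Suc k}" | p0 where "p0 \<in> B" "p = iota k ` p0"
  using assms by (auto simp: Ik_def)

lemma inj_image_iota: "inj (image (iota k))"
  by (simp add: inj_def inj_image_eq_iff inj_iota)

lemma B1_Ik:
  assumes "\<forall>p\<in>B. finite p \<and> p \<noteq> {}"
  shows "B1 (Ik k B) = insert {k, Suc k} (image (iota k) ` B1 B)"
proof -
  have "odd (Max (iota k ` p) - Min (iota k ` p)) \<longleftrightarrow> odd (Max p - Min p)" if "p \<in> B" for p
    using assms that by (simp add: odd_iota_diff_iff)
  then show ?thesis
    by (auto simp: B1_def Ik_def)
qed

lemma B0_Ik:
  assumes "\<forall>p\<in>B. finite p \<and> p \<noteq> {}"
  shows "B0 (Ik k B) = image (iota k) ` B0 B"
proof -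
  have "even (Max (iota k ` p) - Min (iota k ` p)) \<longleftrightarrow> even (Max p - Min p)" if "p \<in> B" for p
    using assms that by (simp add: odd_iota_diff_iff)
  then show ?thesis
    by (auto simp: B0_def Ik_def)
qed

lemma card_B0_Ik:
  assumes "\<forall>p\<in>B. finite p \<and> p \<noteq> {}"
  shows "card (B0 (Ik k B)) = card (B0 B)"
  using assms by (simp add: B0_Ik card_image inj_on_subset[OF inj_image_iota])

lemma Ik_in_PM:
  assumes B: "B \<in> PM (M - 2)" and k: "1 \<le> k" "k \<le> M - 2"
  shows "Ik k B \<in> PM M"
proof -
  have pairs: "finite B" "\<forall>p\<in>B. p \<subseteq> {1..M - 2} \<and> card p = 2"
    "\<forall>p\<in>B. \<forall>q\<in>B. p \<noteq> q \<longrightarrow> p \<inter> q = {}"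
    using B by (auto simp: PM_def)
  have adj: "{k, Suc k} \<subseteq> {1..M}" "card {k, Suc k} = 2"
    using k by auto
  have img: "iota k ` p \<subseteq> {1..M}" "card (iota k ` p) = 2" if "p \<in> B" for p
  proof -
    have "p \<subseteq> {1..M - 2}" "card p = 2"
      using pairs(2) that by auto
    then show "iota k ` p \<subseteq> {1..M}"
      using image_iota_atLeastAtMost_subset by blast
    show "card (iota k ` p) = 2"
      using \<open>card p = 2\<close> by (simp add: card_image inj_on_subset[OF inj_iota])
  qed
  have disj: "iota k ` p \<inter> iota k ` q = {}" if "p \<in> B" "q \<in> B" "iota k ` p \<noteq> iota k ` q" for p q
  proof -
    have "p \<inter> q = {}"
      using pairs(3) that by blast
    then show ?thesis
      by (simp flip: image_Int[OF inj_iota])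
  qed
  have adj_disj: "{k, Suc k} \<inter> iota k ` p = {}" "iota k ` p \<inter> {k, Suc k} = {}" for p
    by (auto simp: iota_def)
  have "finite (Ik k B)"
    using pairs(1) by (simp add: Ik_def)
  moreover have "p \<subseteq> {1..M} \<and> card p = 2" if "p \<in> Ik k B" for p
    using that by (cases rule: Ik_cases) (use adj img in blast)+
  moreover have "p \<inter> q = {}" if p: "p \<in> Ik k B" and q: "q \<in> Ik k B" and "p \<noteq> q" for p q
    using p
  proof (cases rule: Ik_cases)
    case adjacent
    obtain q0 where "q = iota k ` q0"
      using q adjacent \<open>p \<noteq> q\<close> by (cases rule: Ik_cases) blast+
    then show ?thesis
      using adjacent adj_disj by simp
  next
    case p_shifted: (shifted p0)
    from q show ?thesis
    proof (cases rule: Ik_cases)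
      case adjacent
      then show ?thesis
        using p_shifted adj_disj by simp
    next
      case (shifted q0)
      then show ?thesis
        using p_shifted disj \<open>p \<noteq> q\<close> by simp
    qed
  qed
  ultimately show ?thesis
    by (rule PM_intro)
qed

lemma PM_eq_Ik:
  assumes B: "B \<in> PM M" and adj: "{k, Suc k} \<in> B" and k: "1 \<le> k" "k \<le> M - 2"
  shows "\<exists>B'\<in>PM (M - 2). B = Ik k B'"
proof -
  define B' where "B' = (\<lambda>p. iota k -` p) ` (B - {{k, Suc k}})"
  have pairs: "finite B" "\<forall>p\<in>B. p \<subseteq> {1..M} \<and> card p = 2"
    "\<forall>p\<in>B. \<forall>q\<in>B. p \<noteq> q \<longrightarrow> p \<inter> q = {}"
    using B by (auto simp: PM_def)
  have iota_vimage: "iota k ` (iota k -` p) = p" if "p \<in> B - {{k, Suc k}}" for p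
  proof -
    have "p \<inter> {k, Suc k} = {}"
      using pairs(3)[rule_format, of p "{k, Suc k}"] that adj by blast
    then show ?thesis
      by (auto simp: range_iota)
  qed
  have "Ik k B' = (\<lambda>p. iota k ` (iota k -` p)) ` (B - {{k, Suc k}}) \<union> {{k, Suc k}}"
    unfolding Ik_def B'_def by auto
  also have "\<dots> = B"
    using iota_vimage adj by auto
  finally have eq: "B = Ik k B'" ..
  have "finite B'"
    using pairs(1) by (simp add: B'_def)
  moreover have "p' \<subseteq> {1..M - 2} \<and> card p' = 2" if p': "p' \<in> B'" for p'
  proof -
    obtain p where p: "p \<in> B - {{k, Suc k}}" "p' = iota k -` p"
      using p' B'_def by blast
    have "p \<subseteq> {1..M}" "card p = 2"
      using pairs(2) p(1) by auto
    then have "p' \<subseteq> iota k -` {1..M}"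
      using p(2) by auto
    moreover have "iota k -` {1..M} = {1..M - 2}"
      using k by (intro vimage_iota_atLeastAtMost_1) auto
    ultimately have "p' \<subseteq> {1..M - 2}"
      by simp
    moreover have "card p' = 2"
      by (metis p \<open>card p = 2\<close> iota_vimage card_image inj_on_subset[OF inj_iota] subset_UNIV)
    ultimately show ?thesis ..
  qed
  moreover have "p' \<inter> q' = {}" if pq': "p' \<in> B'" "q' \<in> B'" "p' \<noteq> q'" for p' q'
  proof -
    obtain p q where "p \<in> B" "q \<in> B" "p \<noteq> q" "p' = iota k -` p" "q' = iota k -` q"
      using pq' B'_def by blast
    moreover have "p \<inter> q = {}"
      using pairs(3)[rule_format, of p q] \<open>p \<in> B\<close> \<open>q \<in> B\<close> \<open>p \<noteq> q\<close> by blast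
    ultimately show ?thesis
      by auto
  qed
  ultimately have "B' \<in> PM (M - 2)"
    by (rule PM_intro)
  with eq show ?thesis
    by blast
qed

section \<open>Transfer of the defining conditions along the insertion\<close>

lemma zero_covered_vimage_iota:
  assumes fin: "\<forall>p\<in>B. finite p \<and> p \<noteq> {}" and "zero_covered (Ik k B) X"
  shows "zero_covered B (iota k -` X)"
proof -
  obtain S where S: "S \<subseteq> B1 (Ik k B)"
    and dis: "\<And>p q. p \<in> S \<Longrightarrow> q \<in> S \<Longrightarrow> p \<noteq> q \<Longrightarrow> {Min p..Max p} \<inter> {Min q..Max q} = {}"
    and X: "X = (\<Union>p\<in>S. {Min p..Max p})"
    using assms(2) by (rule zero_coveredE) (rule that)
  define S0 where "S0 = {p0 \<in> B1 B. iota k ` p0 \<in> S}"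
  have vimage_span: "iota k -` {Min (iota k ` p0)..Max (iota k ` p0)} = {Min p0..Max p0}"
    if "p0 \<in> S0" for p0
  proof -
    have "finite p0" "p0 \<noteq> {}"
      using that fin by (auto simp: S0_def B1_def)
    then show ?thesis
      by simp
  qed
  have S_eq: "S - {{k, Suc k}} = image (iota k) ` S0"
  proof
    show "S - {{k, Suc k}} \<subseteq> image (iota k) ` S0"
      using S by (auto simp: B1_Ik[OF fin] S0_def)
    have "iota k ` p0 \<noteq> {k, Suc k}" for p0
      using iota_neq(1) by (metis imageE insertI1)
    then show "image (iota k) ` S0 \<subseteq> S - {{k, Suc k}}"
      by (auto simp: S0_def)
  qed
  have "iota k -` X = (\<Union>p\<in>S. iota k -` {Min p..Max p})"
    using X by auto
  also have "\<dots> = (\<Union>p\<in>S - {{k, Suc k}}. iota k -` {Min p..Max p})"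
  proof -
    have "iota k -` {Min {k, Suc k}..Max {k, Suc k}} = {}"
      by simp
    then show ?thesis
      by blast
  qed
  also have "\<dots> = (\<Union>p0\<in>S0. iota k -` {Min (iota k ` p0)..Max (iota k ` p0)})"
    unfolding S_eq by simp
  also have "\<dots> = (\<Union>p0\<in>S0. {Min p0..Max p0})"
    using vimage_span by simp
  finally have X0: "iota k -` X = (\<Union>p0\<in>S0. {Min p0..Max p0})" .
  show ?thesis
  proof (rule zero_coveredI)
    show "S0 \<subseteq> B1 B"
      by (auto simp: S0_def)
  next
    fix p0 q0 assume pq0: "p0 \<in> S0" "q0 \<in> S0" "p0 \<noteq> q0"
    then have "iota k ` p0 \<in> S" "iota k ` q0 \<in> S" "iota k ` p0 \<noteq> iota k ` q0"
      by (auto simp: S0_def inj_image_eq_iff inj_iota)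
    then have "{Min (iota k ` p0)..Max (iota k ` p0)} \<inter> {Min (iota k ` q0)..Max (iota k ` q0)} = {}"
      using dis by blast
    then have "iota k -` ({Min (iota k ` p0)..Max (iota k ` p0)} \<inter> {Min (iota k ` q0)..Max (iota k ` q0)}) = {}"
      by simp
    then show "{Min p0..Max p0} \<inter> {Min q0..Max q0} = {}"
      by (simp only: vimage_Int vimage_span pq0(1,2))
  qed (rule X0)
qed

lemma zero_covered_insert_adjacent:
  assumes fin: "\<forall>p\<in>B. finite p \<and> p \<noteq> {}"
    and U: "zero_covered (Ik k B) U" and "k \<notin> U" "Suc k \<notin> U"
  shows "zero_covered (Ik k B) ({k, Suc k} \<union> U)"
proof -
  obtain S where S: "S \<subseteq> B1 (Ik k B)"
    and dis: "\<And>p q. p \<in> S \<Longrightarrow> q \<in> S \<Longrightarrow> p \<noteq> q \<Longrightarrow> {Min p..Max p} \<inter> {Min q..Max q} = {}"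
    and U_eq: "U = (\<Union>p\<in>S. {Min p..Max p})"
    using U by (rule zero_coveredE) (rule that)
  have adj_span: "{Min {k, Suc k}..Max {k, Suc k}} = {k, Suc k}"
    by auto
  have adj_dis: "{Min p..Max p} \<inter> {k, Suc k} = {}" if "p \<in> S" for p
  proof -
    have "{Min p..Max p} \<subseteq> U"
      using that U_eq by blast
    then show ?thesis
      using \<open>k \<notin> U\<close> \<open>Suc k \<notin> U\<close> by blast
  qed
  show ?thesis
  proof (rule zero_coveredI)
    show "insert {k, Suc k} S \<subseteq> B1 (Ik k B)"
      using S B1_Ik[OF fin] by blast
  next
    fix p q assume pq: "p \<in> insert {k, Suc k} S" "q \<in> insert {k, Suc k} S" "p \<noteq> q"
    have "p = {k, Suc k} \<or> p \<in> S" "q = {k, Suc k} \<or> q \<in> S"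
      using pq(1,2) by simp_all
    then consider "p \<in> S" "q \<in> S" | "p = {k, Suc k}" "q \<in> S" | "p \<in> S" "q = {k, Suc k}"
      using pq(3) by blast
    then show "{Min p..Max p} \<inter> {Min q..Max q} = {}"
    proof cases
      case 1
      then show ?thesis
        using dis \<open>p \<noteq> q\<close> by blast
    next
      case 2
      then show ?thesis
        using adj_dis[of q] adj_span by (simp add: Int_commute)
    next
      case 3
      then show ?thesis
        using adj_dis[of p] adj_span by simp
    qed
  next
    show "{k, Suc k} \<union> U = (\<Union>p\<in>insert {k, Suc k} S. {Min p..Max p})"
      by (simp only: UN_insert adj_span U_eq)
  qed
qed

lemma zero_covered_Ik_shift:
  assumes fin: "\<forall>p\<in>B. finite p \<and> p \<noteq> {}" and "zero_covered B Y"
  obtains U where "zero_covered (Ik k B) U" "iota k -` U = Y" "k \<in> U \<longleftrightarrow> Suc k \<in> U"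
    and "k \<in> U \<Longrightarrow> \<exists>u\<in>Y. \<exists>v\<in>Y. u < k \<and> k \<le> v"
proof -
  obtain S0 where S0: "S0 \<subseteq> B1 B"
    and dis: "\<And>p q. p \<in> S0 \<Longrightarrow> q \<in> S0 \<Longrightarrow> p \<noteq> q \<Longrightarrow> {Min p..Max p} \<inter> {Min q..Max q} = {}"
    and Y: "Y = (\<Union>p\<in>S0. {Min p..Max p})"
    using assms(2) by (rule zero_coveredE) (rule that)
  have fin0: "finite p" "p \<noteq> {}" if "p \<in> S0" for p
    using that S0 fin by (auto simp: B1_def)
  have span: "{Min (iota k ` p)..Max (iota k ` p)} = {iota k (Min p)..iota k (Max p)}" if "p \<in> S0" for p
    using fin0[OF that] by simp
  define U where "U = (\<Union>p\<in>S0. {iota k (Min p)..iota k (Max p)})"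
  have covered: "zero_covered (Ik k B) U"
  proof (rule zero_coveredI)
    show "image (iota k) ` S0 \<subseteq> B1 (Ik k B)"
      using S0 by (auto simp: B1_Ik[OF fin])
  next
    fix p q assume "p \<in> image (iota k) ` S0" "q \<in> image (iota k) ` S0" "p \<noteq> q"
    then obtain p0 q0 where "p0 \<in> S0" "q0 \<in> S0" "p0 \<noteq> q0" "p = iota k ` p0" "q = iota k ` q0"
      by blast
    moreover have "{Min p0..Max p0} \<inter> {Min q0..Max q0} = {}"
      using dis \<open>p0 \<in> S0\<close> \<open>q0 \<in> S0\<close> \<open>p0 \<noteq> q0\<close> by blast
    ultimately show "{Min p..Max p} \<inter> {Min q..Max q} = {}"
      by (simp only: span iota_atLeastAtMost_disjoint)
  next
    show "U = (\<Union>p\<in>image (iota k) ` S0. {Min p..Max p})"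
      unfolding U_def image_image by (rule SUP_cong[OF refl]) (rule span[symmetric])
  qed
  have vimage: "iota k -` U = Y"
    unfolding U_def Y by auto
  have U_adj: "k \<in> U \<longleftrightarrow> (\<exists>p\<in>S0. Min p < k \<and> k \<le> Max p)"
    "Suc k \<in> U \<longleftrightarrow> (\<exists>p\<in>S0. Min p < k \<and> k \<le> Max p)"
    unfolding U_def by (simp_all only: UN_iff iota_atLeastAtMost_adjacent)
  have straddle: "\<exists>u\<in>Y. \<exists>v\<in>Y. u < k \<and> k \<le> v" if "k \<in> U"
  proof -
    obtain p where p: "p \<in> S0" "Min p < k" "k \<le> Max p"
      using \<open>k \<in> U\<close> U_adj(1) by blast
    then have "Min p \<in> {Min p..Max p}" "Max p \<in> {Min p..Max p}"
      by auto
    then have "Min p \<in> Y" "Max p \<in> Y"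
      using Y p(1) by blast+
    then show ?thesis
      using p(2,3) by blast
  qed
  show thesis
    using U_adj by (intro that[OF covered vimage _ straddle]) simp
qed

lemma zero_covered_Ik_of_vimage:
  assumes fin: "\<forall>p\<in>B. finite p \<and> p \<noteq> {}"
    and adj: "k \<in> X \<longleftrightarrow> Suc k \<in> X"
    and conv: "\<forall>u\<in>X. \<forall>v\<in>X. u < k \<longrightarrow> Suc k < v \<longrightarrow> k \<in> X"
    and "zero_covered B (iota k -` X)"
  shows "zero_covered (Ik k B) X"
proof -
  obtain U where U: "zero_covered (Ik k B) U" "iota k -` U = iota k -` X" "k \<in> U \<longleftrightarrow> Suc k \<in> U"
    and straddle: "k \<in> U \<Longrightarrow> \<exists>u\<in>iota k -` X. \<exists>v\<in>iota k -` X. u < k \<and> k \<le> v"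
    using fin assms(4) by (rule zero_covered_Ik_shift) (rule that)
  show ?thesis
  proof (cases "k \<in> U")
    case True
    then obtain u v where "iota k u \<in> X" "iota k v \<in> X" "u < k" "k \<le> v"
      using straddle by auto
    moreover have "iota k u = u" "iota k v = v + 2"
      using \<open>u < k\<close> \<open>k \<le> v\<close> by (auto simp: iota_def)
    ultimately have "u \<in> X" "v + 2 \<in> X" "u < k" "Suc k < v + 2"
      by auto
    then have "k \<in> X"
      using conv by blast
    have "X = U"
    proof (rule set_eq_iota)
      show "iota k -` X = iota k -` U"
        using U(2) by simp
      show "X \<inter> {k, Suc k} = U \<inter> {k, Suc k}"
        using \<open>k \<in> X\<close> adj True U(3) by auto
    qed
    then show ?thesis
      using U(1) by simp
  next
    case False
    then have "Suc k \<notin> U"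
      using U(3) by simp
    show ?thesis
    proof (cases "k \<in> X")
      case True
      have "X = {k, Suc k} \<union> U"
      proof (rule set_eq_iota)
        show "iota k -` X = iota k -` ({k, Suc k} \<union> U)"
          using U(2) by (simp only: vimage_Un vimage_iota_adjacent Un_empty_left)
        show "X \<inter> {k, Suc k} = ({k, Suc k} \<union> U) \<inter> {k, Suc k}"
          using True adj by auto
      qed
      then show ?thesis
        using zero_covered_insert_adjacent[OF fin U(1) False \<open>Suc k \<notin> U\<close>] by simp
    next
      case False
      have "X = U"
      proof (rule set_eq_iota)
        show "iota k -` X = iota k -` U"
          using U(2) by simp
        show "X \<inter> {k, Suc k} = U \<inter> {k, Suc k}"
          using False adj \<open>k \<notin> U\<close> \<open>Suc k \<notin> U\<close> by auto
      qed
      then show ?thesis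
        using U(1) by simp
    qed
  qed
qed

lemma zero_covered_Ik_iff:
  assumes fin: "\<forall>p\<in>B. finite p \<and> p \<noteq> {}"
    and "k \<in> X \<longleftrightarrow> Suc k \<in> X"
    and "\<forall>u\<in>X. \<forall>v\<in>X. u < k \<longrightarrow> Suc k < v \<longrightarrow> k \<in> X"
  shows "zero_covered (Ik k B) X \<longleftrightarrow> zero_covered B (iota k -` X)"
proof
  assume "zero_covered (Ik k B) X"
  then show "zero_covered B (iota k -` X)"
    by (rule zero_covered_vimage_iota[OF fin])
next
  assume "zero_covered B (iota k -` X)"
  then show "zero_covered (Ik k B) X"
    by (rule zero_covered_Ik_of_vimage[OF assms])
qed

lemma zero_covered_Ik_interval_iff:
  assumes "\<forall>p\<in>B. finite p \<and> p \<noteq> {}"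
  shows "zero_covered (Ik k B) {iota k x + 1..iota k y - 1} \<longleftrightarrow> zero_covered B {x + 1..y - 1}"
proof -
  let ?I = "{iota k x + 1..iota k y - 1}"
  have "k \<in> ?I \<longleftrightarrow> Suc k \<in> ?I"
    by (auto simp: iota_def split: if_splits)
  moreover have "\<forall>u\<in>?I. \<forall>v\<in>?I. u < k \<longrightarrow> Suc k < v \<longrightarrow> k \<in> ?I"
    by auto
  moreover have "iota k -` ?I = {x + 1..y - 1}"
    by (auto simp: iota_def split: if_splits)
  ultimately show ?thesis
    using zero_covered_Ik_iff[OF assms, of k ?I] by simp
qed

lemma zero_covered_Ik_prefix_iff:
  assumes "\<forall>p\<in>B. finite p \<and> p \<noteq> {}" and "1 \<le> k"
  shows "zero_covered (Ik k B) {1..iota k x - 1} \<longleftrightarrow> zero_covered B {1..x - 1}"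
proof -
  have "iota k 0 = 0"
    using assms(2) by (simp add: iota_def)
  then show ?thesis
    using zero_covered_Ik_interval_iff[OF assms(1), of k 0 x] by simp
qed

lemma zero_covered_Ik_suffix_iff:
  assumes "\<forall>p\<in>B. finite p \<and> p \<noteq> {}" and "k < M"
  shows "zero_covered (Ik k B) {iota k x + 1..M} \<longleftrightarrow> zero_covered B {x + 1..M - 2}"
proof -
  have "iota k (M - 1) = M + 1"
    using assms(2) by (simp add: iota_def)
  moreover have "M - 1 - 1 = M - 2"
    by simp
  ultimately show ?thesis
    using zero_covered_Ik_interval_iff[OF assms(1), of k x "M - 1"] by simp
qed

lemma interior_covered_Ik_iff:
  assumes fin: "\<forall>p\<in>B. finite p \<and> p \<noteq> {}"
  shows "(\<forall>p\<in>B1 (Ik k B). zero_covered (Ik k B) {Min p + 1..Max p - 1})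
     \<longleftrightarrow> (\<forall>p\<in>B1 B. zero_covered B {Min p + 1..Max p - 1})"
proof -
  have "zero_covered (Ik k B) {Min (iota k ` p) + 1..Max (iota k ` p) - 1}
      \<longleftrightarrow> zero_covered B {Min p + 1..Max p - 1}" if "p \<in> B1 B" for p
  proof -
    have "finite p" "p \<noteq> {}"
      using fin that by (auto simp: B1_def)
    then show ?thesis
      using zero_covered_Ik_interval_iff[OF fin, of k "Min p" "Max p"] by simp
  qed
  moreover have "zero_covered (Ik k B) {Min {k, Suc k} + 1..Max {k, Suc k} - 1}"
    by (rule zero_coveredI[of "{}"]) auto
  ultimately show ?thesis
    by (simp add: B1_Ik[OF fin])
qed

lemma partner_Ik_iff:
  assumes "k + 2 \<le> M"
  shows "(\<exists>j. even j \<and> {j, M} \<in> Ik k B) \<longleftrightarrow> (\<exists>j. even j \<and> {j, M - 2} \<in> B)"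
proof -
  have iota_M: "iota k (M - 2) = M"
    using assms by (auto simp: iota_def)
  have "{j, M} \<in> Ik k B \<longleftrightarrow> (\<exists>a. j = iota k a \<and> {a, M - 2} \<in> B)" for j
  proof
    assume jM: "{j, M} \<in> Ik k B"
    have "{j, M} \<noteq> {k, Suc k}"
      using assms by (auto simp: doubleton_eq_iff)
    with jM obtain p where p: "p \<in> B" "{j, M} = iota k ` p"
      by (cases rule: Ik_cases) blast+
    then obtain a where a: "j = iota k a"
      by blast
    have "p = iota k -` {j, M}"
      using p(2) by (simp add: inj_vimage_image_eq inj_iota)
    also have "\<dots> = {a, M - 2}"
      using a iota_M by auto
    finally show "\<exists>a. j = iota k a \<and> {a, M - 2} \<in> B"
      using p(1) a by blast
  next
    assume "\<exists>a. j = iota k a \<and> {a, M - 2} \<in> B"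
    then obtain a where "{a, M - 2} \<in> B" "{j, M} = iota k ` {a, M - 2}"
      using iota_M by auto
    then show "{j, M} \<in> Ik k B"
      unfolding mem_Ik_iff by blast
  qed
  then show ?thesis
    by (metis even_iota_iff)
qed

lemma nest_seq_Ik_iff:
  assumes "\<forall>p\<in>B. finite p \<and> p \<noteq> {}"
  shows "nest_seq (Ik k B) s (iota k \<circ> i) \<longleftrightarrow> nest_seq B s i"
proof -
  have "strict_mono_on {1..2 * s} (iota k \<circ> i) \<longleftrightarrow> strict_mono_on {1..2 * s} i"
    by (simp add: strict_mono_on_def)
  moreover have "{{(iota k \<circ> i) (2 * s + 1 - r), (iota k \<circ> i) r} | r. r \<in> {1..s}}
      = image (iota k) ` {{i (2 * s + 1 - r), i r} | r. r \<in> {1..s}}"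
    unfolding setcompr_eq_image image_image by simp
  ultimately show ?thesis
    unfolding nest_seq_def B0_Ik[OF assms] by (simp add: inj_image_eq_iff[OF inj_image_iota])
qed

lemma seq_covered_Ik_iff:
  assumes "\<forall>p\<in>B. finite p \<and> p \<noteq> {}"
  shows "seq_covered (Ik k B) s (iota k \<circ> i) \<longleftrightarrow> seq_covered B s i"
  unfolding seq_covered_def o_apply zero_covered_Ik_interval_iff[OF assms] ..

lemma nest_seq_Ik_factor:
  assumes "\<forall>p\<in>B. finite p \<and> p \<noteq> {}" and "nest_seq (Ik k B) s j"
  obtains i where "\<forall>r\<in>{1..2 * s}. j r = iota k (i r)"
proof
  have "j ` {1..2 * s} = \<Union>(B0 (Ik k B))"
    using Union_B0_nest_seq[OF assms(2)] by simp
  also have "\<dots> \<subseteq> range (iota k)"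
    unfolding B0_Ik[OF assms(1)] by auto
  finally show "\<forall>r\<in>{1..2 * s}. j r = iota k ((inv (iota k) \<circ> j) r)"
    by (auto simp: f_inv_into_f)
qed

lemma ex_nest_seq_Ik_iff:
  assumes "\<forall>p\<in>B. finite p \<and> p \<noteq> {}"
    and P_Ik: "\<And>i. P (iota k \<circ> i) \<longleftrightarrow> Q i"
    and P_cong: "\<And>i j. \<forall>r\<in>{1..2 * s}. i r = j r \<Longrightarrow> P i \<Longrightarrow> P j"
    and P_nest: "\<And>j. P j \<Longrightarrow> nest_seq (Ik k B) s j"
  shows "(\<exists>j. P j) \<longleftrightarrow> (\<exists>i. Q i)"
proof
  assume "\<exists>j. P j"
  then obtain j where "P j"
    by blast
  moreover obtain i where "\<forall>r\<in>{1..2 * s}. j r = iota k (i r)"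
    using nest_seq_Ik_factor[OF assms(1) P_nest[OF \<open>P j\<close>]] .
  ultimately have "P (iota k \<circ> i)"
    using P_cong by simp
  then show "\<exists>i. Q i"
    using P_Ik by blast
next
  assume "\<exists>i. Q i"
  then show "\<exists>j. P j"
    using P_Ik by blast
qed

lemma ex_seq_covered_Ik_iff:
  assumes fin: "\<forall>p\<in>B. finite p \<and> p \<noteq> {}"
  shows "(\<exists>j. nest_seq (Ik k B) s j \<and> seq_covered (Ik k B) s j)
    \<longleftrightarrow> (\<exists>i. nest_seq B s i \<and> seq_covered B s i)"
proof (rule ex_nest_seq_Ik_iff[OF fin])
  show "nest_seq (Ik k B) s (iota k \<circ> i) \<and> seq_covered (Ik k B) s (iota k \<circ> i)
      \<longleftrightarrow> nest_seq B s i \<and> seq_covered B s i" for i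
    by (simp only: nest_seq_Ik_iff[OF fin] seq_covered_Ik_iff[OF fin])
  show "nest_seq (Ik k B) s j \<and> seq_covered (Ik k B) s j"
    if "\<forall>r\<in>{1..2 * s}. i r = j r" "nest_seq (Ik k B) s i \<and> seq_covered (Ik k B) s i" for i j
    using that nest_seq_cong seq_covered_cong by blast
qed blast

lemma ex_outer_covered_Ik_iff:
  assumes fin: "\<forall>p\<in>B. finite p \<and> p \<noteq> {}" and k: "1 \<le> k" "k < M" and "1 \<le> s"
  shows "(\<exists>j. nest_seq (Ik k B) s j \<and> zero_covered (Ik k B) {1..j 1 - 1}
              \<and> zero_covered (Ik k B) {j (2 * s) + 1..M})
    \<longleftrightarrow> (\<exists>i. nest_seq B s i \<and> zero_covered B {1..i 1 - 1} \<and> zero_covered B {i (2 * s) + 1..M - 2})"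
proof (rule ex_nest_seq_Ik_iff[OF fin])
  show "nest_seq (Ik k B) s (iota k \<circ> i) \<and> zero_covered (Ik k B) {1..(iota k \<circ> i) 1 - 1}
        \<and> zero_covered (Ik k B) {(iota k \<circ> i) (2 * s) + 1..M}
      \<longleftrightarrow> nest_seq B s i \<and> zero_covered B {1..i 1 - 1} \<and> zero_covered B {i (2 * s) + 1..M - 2}" for i
    by (simp only: o_apply nest_seq_Ik_iff[OF fin] zero_covered_Ik_prefix_iff[OF fin k(1)]
        zero_covered_Ik_suffix_iff[OF fin k(2)])
  show "nest_seq (Ik k B) s j \<and> zero_covered (Ik k B) {1..j 1 - 1} \<and> zero_covered (Ik k B) {j (2 * s) + 1..M}"
    if "\<forall>r\<in>{1..2 * s}. i r = j r"
      "nest_seq (Ik k B) s i \<and> zero_covered (Ik k B) {1..i 1 - 1} \<and> zero_covered (Ik k B) {i (2 * s) + 1..M}"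
    for i j
  proof -
    have "1 \<in> {1..2 * s}" "2 * s \<in> {1..2 * s}"
      using \<open>1 \<le> s\<close> by auto
    then have "i 1 = j 1" "i (2 * s) = j (2 * s)"
      using that(1) by blast+
    then show ?thesis
      using that nest_seq_cong by metis
  qed
qed blast

lemma Ik_in_primeXminus_iff:
  assumes B: "B \<in> PM (M - 2)" and k: "1 \<le> k" "k \<le> M - 2"
  shows "Ik k B \<in> primeXminus M \<longleftrightarrow> B \<in> primeXminus (M - 2)"
proof -
  have fin: "\<forall>p\<in>B. finite p \<and> p \<noteq> {}"
    using B by (rule PM_finite_nonempty)
  define s where "s = card (B0 B)"
  have card: "card (B0 (Ik k B)) = s"
    unfolding s_def by (rule card_B0_Ik[OF fin])
  have "k < M" "k + 2 \<le> M"
    using k by linarith+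
  have outer: "(s = 0 \<or> (\<exists>j. nest_seq (Ik k B) s j \<and> zero_covered (Ik k B) {1..j 1 - 1}
                              \<and> zero_covered (Ik k B) {j (2 * s) + 1..M}))
      \<longleftrightarrow> (s = 0 \<or> (\<exists>i. nest_seq B s i \<and> zero_covered B {1..i 1 - 1}
                              \<and> zero_covered B {i (2 * s) + 1..M - 2}))"
    using ex_outer_covered_Ik_iff[OF fin k(1) \<open>k < M\<close>, of s] by (cases "s = 0") simp_all
  show ?thesis
    unfolding mem_primeXminus_iff card s_def[symmetric] interior_covered_Ik_iff[OF fin]
      ex_seq_covered_Ik_iff[OF fin] outer partner_Ik_iff[OF \<open>k + 2 \<le> M\<close>]
    using Ik_in_PM[OF B k] B by blast
qed

section \<open>The nested configurations\<close>

definition nested_pairs :: "nat \<Rightarrow> nat \<Rightarrow> nat set set" where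
  "nested_pairs M \<tau> = {{M - 1 - r, r} | r. r \<in> {1..\<tau>}}"

lemma primePr_eq:
  assumes "3 \<le> M"
  shows "primePr M = {insert {M - 1, M} (nested_pairs M \<tau>) | \<tau>. even \<tau> \<and> 2 * \<tau> + 3 \<le> M}"
proof -
  define fan where "fan \<tau> = insert {M - 1, M} (nested_pairs M \<tau>)" for \<tau>
  have bound: "\<tau> \<le> (M - 3) div 2 \<longleftrightarrow> 2 * \<tau> + 3 \<le> M" for \<tau>
    using assms by auto
  have "{{M - 1, M}} \<union> {{M - 1 - r, r} | r. r \<in> {1..\<tau>}} = fan \<tau>" for \<tau>
    by (simp add: fan_def nested_pairs_def)
  then have "primePr M = insert (fan 0) (fan ` {\<tau>. even \<tau> \<and> 2 \<le> \<tau> \<and> 2 * \<tau> + 3 \<le> M})"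
    unfolding primePr_def bound setcompr_eq_image by (simp add: fan_def nested_pairs_def)
  also have "\<dots> = fan ` insert 0 {\<tau>. even \<tau> \<and> 2 \<le> \<tau> \<and> 2 * \<tau> + 3 \<le> M}"
    by simp
  also have "insert 0 {\<tau>. even \<tau> \<and> 2 \<le> \<tau> \<and> 2 * \<tau> + 3 \<le> M} = {\<tau>. even \<tau> \<and> 2 * \<tau> + 3 \<le> M}"
    using assms by (auto elim!: evenE)
  finally show ?thesis
    unfolding fan_def setcompr_eq_image by simp
qed

lemma nested_configuration:
  assumes M: "odd M" and \<tau>: "2 * \<tau> + 3 \<le> M"
  defines "B \<equiv> insert {M - 1, M} (nested_pairs M \<tau>)"
  shows "B \<in> PM M" "B0 B = nested_pairs M \<tau>" "B1 B = {{M - 1, M}}" "card (B0 B) = \<tau>"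
proof -
  have top: "Min {M - 1, M} = M - 1" "Max {M - 1, M} = M" "odd (M - (M - 1))"
    using \<tau> by auto
  have nested: "Min {M - 1 - r, r} = r" "Max {M - 1 - r, r} = M - 1 - r" "even (M - 1 - r - r)"
    if "r \<in> {1..\<tau>}" for r
  proof -
    have "r < M - 1 - r"
      using that \<tau> by auto
    then show "Min {M - 1 - r, r} = r" "Max {M - 1 - r, r} = M - 1 - r"
      by auto
    show "even (M - 1 - r - r)"
      using M \<open>r < M - 1 - r\<close> by presburger
  qed
  have nested_width: "even (Max p - Min p)" if p: "p \<in> nested_pairs M \<tau>" for p
  proof -
    obtain r where r: "r \<in> {1..\<tau>}" "p = {M - 1 - r, r}"
      using p unfolding nested_pairs_def by blast
    show ?thesis
      unfolding r(2) nested(1,2)[OF r(1)] by (rule nested(3)[OF r(1)])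
  qed
  have nested_eq: "nested_pairs M \<tau> = (\<lambda>r. {M - 1 - r, r}) ` {1..\<tau>}"
    by (auto simp: nested_pairs_def)
  show "B \<in> PM M"
  proof (rule PM_intro)
    show "finite B"
      by (simp add: B_def nested_eq)
    show "p \<subseteq> {1..M} \<and> card p = 2" if "p \<in> B" for p
      using that \<tau> by (auto simp: B_def nested_eq)
    show "p \<inter> q = {}" if "p \<in> B" "q \<in> B" "p \<noteq> q" for p q
      using that \<tau> by (auto simp: B_def nested_eq)
  qed
  show B0: "B0 B = nested_pairs M \<tau>"
    using top nested_width by (auto simp: B0_def B_def)
  show "B1 B = {{M - 1, M}}"
    using top nested_width by (auto simp: B1_def B_def)
  have "inj_on (\<lambda>r. {M - 1 - r, r}) {1..\<tau>}"
    by (rule inj_onI) (metis nested(1))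
  then show "card (B0 B) = \<tau>"
    by (simp add: B0 nested_eq card_image)
qed

lemma fan_in_primeXminus:
  assumes M: "odd M" and \<tau>: "even \<tau>" "2 * \<tau> + 3 \<le> M"
  defines "B \<equiv> insert {M - 1, M} (nested_pairs M \<tau>)"
  shows "B \<in> primeXminus M"
proof -
  note PM = nested_configuration(1)[OF M \<tau>(2), folded B_def]
    and B0 = nested_configuration(2)[OF M \<tau>(2), folded B_def]
    and B1 = nested_configuration(3)[OF M \<tau>(2), folded B_def]
    and card = nested_configuration(4)[OF M \<tau>(2), folded B_def]
  have top: "Min {M - 1, M} = M - 1" "Max {M - 1, M} = M"
    using \<tau> by auto
  (* the nesting sequence 1, ..., \<tau>, M - 1 - \<tau>, ..., M - 2 *)
  define i where "i r = (if r \<le> \<tau> then r else r + (M - 2 - 2 * \<tau>))" for r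
  have i_nested: "i r = r" "i (2 * \<tau> + 1 - r) = M - 1 - r" if "r \<in> {1..\<tau>}" for r
    using that \<tau> by (auto simp: i_def)
  have "nest_seq B \<tau> i"
    unfolding nest_seq_def
  proof
    show "strict_mono_on {1..2 * \<tau>} i"
      using \<tau> by (auto simp: strict_mono_on_def i_def)
    show "B0 B = {{i (2 * \<tau> + 1 - r), i r} | r. r \<in> {1..\<tau>}}"
      unfolding B0 nested_pairs_def using i_nested by (metis (no_types, lifting))
  qed
  moreover have "seq_covered B \<tau> i"
    unfolding seq_covered_def using \<tau>
    by (auto simp: i_def zero_covered_empty)
  moreover have "\<tau> = 0 \<or> zero_covered B {1..i 1 - 1} \<and> zero_covered B {i (2 * \<tau>) + 1..M}"
  proof (cases "\<tau> = 0")
    case False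
    then have "i 1 = 1" "i (2 * \<tau>) = M - 2"
      using \<tau> by (auto simp: i_def)
    moreover have "{M - 2 + 1..M} = {Min {M - 1, M}..Max {M - 1, M}}"
      using top \<tau> by auto
    ultimately show ?thesis
      using zero_covered_empty zero_covered_pair[of "{M - 1, M}" B] B1 by simp
  qed simp
  moreover have "\<forall>p\<in>B1 B. zero_covered B {Min p + 1..Max p - 1}"
    using top by (simp add: B1 zero_covered_empty)
  moreover have "even (M - 1)" "{M - 1, M} \<in> B"
    using M by (auto simp: B_def)
  ultimately show ?thesis
    unfolding mem_primeXminus_iff card using PM \<tau>(1) by blast
qed

section \<open>Configurations without adjacent pairs\<close>

text \<open>Without adjacent pairs, an odd pair of minimal width other than the top pair would contain
  in its 0-covered interior an odd pair of smaller width.\<close>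
lemma B1_subset_top_pair:
  assumes B: "B \<in> PM M"
    and interior: "\<forall>p\<in>B1 B. zero_covered B {Min p + 1..Max p - 1}"
    and no_adj: "\<And>k. 1 \<le> k \<Longrightarrow> k \<le> M - 2 \<Longrightarrow> {k, Suc k} \<notin> B"
  shows "B1 B \<subseteq> {{M - 1, M}}"
proof -
  have "p = {M - 1, M}" if "p \<in> B1 B" for p
    using that
  proof (induction "Max p - Min p" arbitrary: p rule: less_induct)
    case less
    have "p \<in> B"
      using less.prems by (simp add: B1_def)
    then have "p \<subseteq> {1..M}" "card p = 2"
      using B by (auto simp: PM_def)
    then have p: "p = {Min p, Max p}" "Min p < Max p" "1 \<le> Min p" "Max p \<le> M"
      using card_2_Min_Max by (metis atLeastAtMost_iff insert_subset)+
    have odd_width: "odd (Max p - Min p)"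
      using less.prems by (simp add: B1_def)
    show ?case
    proof (cases "Max p = Suc (Min p)")
      case True
      have "\<not> Min p \<le> M - 2"
        using no_adj[of "Min p"] p(1,3) True \<open>p \<in> B\<close> by auto
      then have "Min p = M - 1" "Max p = M"
        using p(4) True by linarith+
      then show ?thesis
        using p(1) by simp
    next
      case False
      then have "Min p + 3 \<le> Max p"
        using p(2) odd_width by presburger
      have "zero_covered B {Min p + 1..Max p - 1}"
        using interior less.prems by blast
      moreover have "Min p + 1 \<in> {Min p + 1..Max p - 1}"
        using \<open>Min p + 3 \<le> Max p\<close> by simp
      ultimately obtain q where q: "q \<in> B1 B" "Min p + 1 \<in> {Min q..Max q}"
        "{Min q..Max q} \<subseteq> {Min p + 1..Max p - 1}"
        by (rule zero_covered_memE)
      have "Min q \<le> Max q"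
        using q(2) by simp
      then have "Min p + 1 \<le> Min q" "Max q \<le> Max p - 1"
        using q(3) by auto
      then have "Max q - Min q < Max p - Min p"
        using \<open>Min q \<le> Max q\<close> \<open>Min p + 3 \<le> Max p\<close> by linarith
      then have "q = {M - 1, M}"
        using less.hyps q(1) by blast
      then have "Max q = M"
        by simp
      then have False
        using \<open>Max q \<le> Max p - 1\<close> p(2,4) by linarith
      then show ?thesis ..
    qed
  qed
  then show ?thesis
    by blast
qed

lemma B1_eq_top_pair:
  assumes M: "odd M" and B: "B \<in> primeXminus M"
    and no_adj: "\<And>k. 1 \<le> k \<Longrightarrow> k \<le> M - 2 \<Longrightarrow> {k, Suc k} \<notin> B"
  shows "B1 B = {{M - 1, M}}"
proof -
  have PM: "B \<in> PM M" and interior: "\<forall>p\<in>B1 B. zero_covered B {Min p + 1..Max p - 1}"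
    and "\<exists>j. even j \<and> {j, M} \<in> B"
    using B by (simp_all add: mem_primeXminus_iff)
  then obtain j where j: "even j" "{j, M} \<in> B"
    by blast
  have sub: "B1 B \<subseteq> {{M - 1, M}}"
    using PM interior no_adj by (rule B1_subset_top_pair)
  have "{j, M} \<subseteq> {1..M}" "card {j, M} = 2"
    using PM j(2) by (auto simp: PM_def)
  then have "j < M"
    by (cases "j = M") auto
  then have "odd (Max {j, M} - Min {j, M})"
    using M j(1) by simp
  then have "{j, M} \<in> B1 B"
    using j(2) by (simp add: B1_def)
  then show ?thesis
    using sub by (metis empty_iff subset_singleton_iff)
qed

lemma consecutive_nest_values:
  fixes i :: "nat \<Rightarrow> nat"
  assumes mono: "strict_mono_on {1..2 * s} i" and "1 \<le> s"
    and first: "i 1 = 1" and last: "i (2 * s) = n"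
    and step: "\<And>r. r \<in> {1..<s} \<union> {s + 1..<2 * s} \<Longrightarrow> i (Suc r) = Suc (i r)"
  shows "\<forall>r\<in>{1..s}. i r = r \<and> i (2 * s + 1 - r) = n + 1 - r" and "2 * s \<le> n"
proof -
  have low: "i r = r" if "r \<in> {1..s}" for r
    using that
  proof (induction r)
    case (Suc r)
    then show ?case
      using first step[of r] by (cases "r = 0") auto
  qed simp
  have high: "i (2 * s - d) = n - d" if "d < s" for d
    using that
  proof (induction d)
    case (Suc d)
    then have "2 * s - Suc d \<in> {s + 1..<2 * s}" "Suc (2 * s - Suc d) = 2 * s - d"
      by auto
    then have "i (2 * s - d) = Suc (i (2 * s - Suc d))"
      using step[of "2 * s - Suc d"] by simp
    then show ?case
      using Suc by simp
  qed (simp add: last)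
  show "\<forall>r\<in>{1..s}. i r = r \<and> i (2 * s + 1 - r) = n + 1 - r"
  proof
    fix r assume r: "r \<in> {1..s}"
    have "2 * s + 1 - r = 2 * s - (r - 1)" "r - 1 < s"
      using r by auto
    then have "i (2 * s + 1 - r) = n - (r - 1)"
      using high[of "r - 1"] by metis
    moreover have "n - (r - 1) = n + 1 - r"
      using r by simp
    ultimately show "i r = r \<and> i (2 * s + 1 - r) = n + 1 - r"
      using low[OF r] by simp
  qed
  have "Suc s = 2 * s - (s - 1)" "s - 1 < s"
    using assms(2) by auto
  then have "i (Suc s) = n - (s - 1)"
    using high[of "s - 1"] by metis
  moreover have "i s < i (Suc s)"
    using assms(2) by (intro strict_mono_onD[OF mono]) auto
  moreover have "i s = s"
    using low assms(2) by simp
  ultimately show "2 * s \<le> n"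
    by arith
qed

lemma nest_seq_points:
  assumes PM: "B \<in> PM M" and B1: "B1 B = {{M - 1, M}}" and nest: "nest_seq B s i"
    and r: "r \<in> {1..2 * s}"
  shows "i r \<in> {1..M - 2}"
proof -
  obtain p where p: "p \<in> B0 B" "i r \<in> p"
    using Union_B0_nest_seq[OF nest] r by blast
  have "p \<in> B" "p \<notin> B1 B"
    using p(1) by (auto simp: B0_def B1_def)
  moreover have "{M - 1, M} \<in> B1 B"
    by (simp add: B1)
  ultimately have "p \<noteq> {M - 1, M}" "{M - 1, M} \<in> B"
    by (auto simp only: B1_def mem_Collect_eq)
  then have "p \<inter> {M - 1, M} = {}" "p \<subseteq> {1..M}"
    using PM \<open>p \<in> B\<close> by (auto simp: PM_def)
  then have "i r \<in> {1..M}" "i r \<notin> {M - 1, M}"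
    using p(2) by auto
  then show ?thesis
    by auto
qed

lemma nest_seq_forced:
  assumes M: "odd M" and PM: "B \<in> PM M" and B1: "B1 B = {{M - 1, M}}"
    and nest: "nest_seq B s i" "seq_covered B s i" and "1 \<le> s"
    and left: "zero_covered B {1..i 1 - 1}" and right: "zero_covered B {i (2 * s) + 1..M}"
  shows "B0 B = nested_pairs M s" and "2 * s + 3 \<le> M"
proof -
  have covered: "X = {} \<or> X = {M - 1..M}" if "zero_covered B X" for X
    using zero_covered_B1_singleton[OF B1 that] by simp
  have mono: "strict_mono_on {1..2 * s} i"
    using nest(1) by (simp add: nest_seq_def)
  note points = nest_seq_points[OF PM B1 nest(1)]
  have step: "i (Suc r) = Suc (i r)" if r: "r \<in> {1..<s} \<union> {s + 1..<2 * s}" for r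
  proof -
    have "r \<in> {1..2 * s}" "Suc r \<in> {1..2 * s}"
      using r by auto
    then have "i r < i (Suc r)" "i (Suc r) \<le> M - 2"
      using strict_mono_onD[OF mono] points by auto
    moreover have "zero_covered B {i r + 1..i (Suc r) - 1}"
      using nest(2) r by (auto simp: seq_covered_def)
    ultimately have "{i r + 1..i (Suc r) - 1} = {}"
      using covered by fastforce
    then show ?thesis
      using \<open>i r < i (Suc r)\<close> by auto
  qed
  have ends: "1 \<in> {1..2 * s}" "2 * s \<in> {1..2 * s}"
    using \<open>1 \<le> s\<close> by auto
  have "i 1 = 1"
  proof -
    have "{1..i 1 - 1} \<noteq> {M - 1..M}"
    proof
      assume eq: "{1..i 1 - 1} = {M - 1..M}"
      have "M \<in> {1..i 1 - 1}"
        unfolding eq by simp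
      then show False
        using points[OF ends(1)] by auto
    qed
    then have "{1..i 1 - 1} = {}"
      using covered[OF left] by blast
    then show ?thesis
      using points[OF ends(1)] by auto
  qed
  have last: "i (2 * s) = M - 2"
  proof -
    have "M \<in> {i (2 * s) + 1..M}"
      using points[OF ends(2)] by auto
    then have "{i (2 * s) + 1..M} = {M - 1..M}"
      using covered[OF right] by auto
    then show ?thesis
      using points[OF ends(2)] by auto
  qed
  note consecutive = consecutive_nest_values[OF mono \<open>1 \<le> s\<close> \<open>i 1 = 1\<close> last step]
  have nest_values: "i r = r" "i (2 * s + 1 - r) = M - 1 - r" if "r \<in> {1..s}" for r
    using consecutive(1) that by auto
  have "2 * s \<le> M - 2"
    by (rule consecutive(2))
  show "2 * s + 3 \<le> M"
    using M \<open>2 * s \<le> M - 2\<close> \<open>1 \<le> s\<close> by presburger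
  have "B0 B = {{i (2 * s + 1 - r), i r} | r. r \<in> {1..s}}"
    using nest(1) by (simp add: nest_seq_def)
  also have "\<dots> = nested_pairs M s"
    unfolding nested_pairs_def setcompr_eq_image Collect_mem_eq
  proof (rule image_cong[OF refl])
    fix r assume "r \<in> {1..s}"
    then show "{i (2 * s + 1 - r), i r} = {M - 1 - r, r}"
      by (simp only: nest_values)
  qed
  finally show "B0 B = nested_pairs M s" .
qed

lemma primeXminus_without_adjacent_pair:
  assumes M: "odd M" "3 \<le> M" and B: "B \<in> primeXminus M"
    and no_adj: "\<And>k. 1 \<le> k \<Longrightarrow> k \<le> M - 2 \<Longrightarrow> {k, Suc k} \<notin> B"
  shows "B \<in> primePr M"
proof -
  define s where "s = card (B0 B)"
  have PM: "B \<in> PM M" and nest: "\<exists>i. nest_seq B s i \<and> seq_covered B s i"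
    and outer: "s = 0 \<or> (\<exists>i. nest_seq B s i \<and> zero_covered B {1..i 1 - 1}
                            \<and> zero_covered B {i (2 * s) + 1..M})"
    and "even s"
    using B by (simp_all add: mem_primeXminus_iff flip: s_def)
  have B1: "B1 B = {{M - 1, M}}"
    using M(1) B no_adj by (rule B1_eq_top_pair)
  have "B = B0 B \<union> B1 B"
    by (auto simp: B0_def B1_def)
  then have B_eq: "B = insert {M - 1, M} (B0 B)"
    by (simp add: B1)
  obtain \<tau> where \<tau>: "B0 B = nested_pairs M \<tau>" "even \<tau>" "2 * \<tau> + 3 \<le> M"
  proof (cases "s = 0")
    case True
    have "finite (B0 B)"
      using PM by (simp add: PM_def B0_def)
    then have "B0 B = nested_pairs M 0"
      using True by (simp add: s_def nested_pairs_def)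
    then show ?thesis
      using that M(2) by simp
  next
    case False
    obtain i where i: "nest_seq B s i" "seq_covered B s i"
      using nest by blast
    obtain i' where i': "nest_seq B s i'" "zero_covered B {1..i' 1 - 1}"
      "zero_covered B {i' (2 * s) + 1..M}"
      using outer False by blast
    have "i' 1 = i 1" "i' (2 * s) = i (2 * s)"
      using nest_seq_Min_Max[OF i(1)] nest_seq_Min_Max[OF i'(1)] False by simp_all
    then have "zero_covered B {1..i 1 - 1}" "zero_covered B {i (2 * s) + 1..M}"
      using i'(2,3) by simp_all
    then have "B0 B = nested_pairs M s" "2 * s + 3 \<le> M"
      using nest_seq_forced[OF M(1) PM B1 i] False by simp_all
    then show ?thesis
      using that \<open>even s\<close> by blast
  qed
  then show ?thesis
    unfolding primePr_eq[OF M(2)] using B_eq by blast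
qed

section \<open>The recursion\<close>

lemma primeXminus_1: "primeXminus 1 = {}"
proof -
  have "B = {}" if "B \<in> PM 1" for B
  proof -
    have "card p \<le> 1" if "p \<in> B" for p
      using \<open>B \<in> PM 1\<close> that card_mono[of "{1..1}" p] by (auto simp: PM_def)
    then show ?thesis
      using \<open>B \<in> PM 1\<close> by (fastforce simp: PM_def)
  qed
  moreover have "B \<in> PM 1 \<and> (\<exists>j. even j \<and> {j, 1} \<in> B)" if "B \<in> primeXminus 1" for B
    using that by (simp add: mem_primeXminus_iff)
  ultimately show ?thesis
    by blast
qed

lemma primeXminus_recursion:
  assumes M: "odd M" "3 \<le> M"
  shows "primeXminus M = primePr M \<union> {Ik k B' | k B'. k \<in> {1..M - 2} \<and> B' \<in> primeXminus (M - 2)}"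
proof (intro equalityI subsetI)
  fix B assume B: "B \<in> primeXminus M"
  show "B \<in> primePr M \<union> {Ik k B' | k B'. k \<in> {1..M - 2} \<and> B' \<in> primeXminus (M - 2)}"
  proof (cases "\<exists>k. 1 \<le> k \<and> k \<le> M - 2 \<and> {k, Suc k} \<in> B")
    case True
    then obtain k where k: "1 \<le> k" "k \<le> M - 2" "{k, Suc k} \<in> B"
      by blast
    have "B \<in> PM M"
      using B by (simp add: mem_primeXminus_iff)
    then obtain B' where B': "B' \<in> PM (M - 2)" "B = Ik k B'"
      using PM_eq_Ik k(3,1,2) by blast
    have "B' \<in> primeXminus (M - 2)"
      using Ik_in_primeXminus_iff[OF B'(1) k(1,2)] B unfolding B'(2) by simp
    then have "B \<in> {Ik k B' | k B'. k \<in> {1..M - 2} \<and> B' \<in> primeXminus (M - 2)}"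
      using B'(2) k(1,2) by (intro CollectI exI[of _ k] exI[of _ B']) simp
    then show ?thesis
      by (rule UnI2)
  next
    case False
    then have "{k, Suc k} \<notin> B" if "1 \<le> k" "k \<le> M - 2" for k
      using that by blast
    then have "B \<in> primePr M"
      by (rule primeXminus_without_adjacent_pair[OF M B])
    then show ?thesis
      by (rule UnI1)
  qed
next
  fix B assume "B \<in> primePr M \<union> {Ik k B' | k B'. k \<in> {1..M - 2} \<and> B' \<in> primeXminus (M - 2)}"
  then consider "B \<in> primePr M"
    | k B' where "k \<in> {1..M - 2}" "B' \<in> primeXminus (M - 2)" "B = Ik k B'"
    by blast
  then show "B \<in> primeXminus M"
  proof cases
    case 1
    then obtain \<tau> where "even \<tau>" "2 * \<tau> + 3 \<le> M" "B = insert {M - 1, M} (nested_pairs M \<tau>)"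
      unfolding primePr_eq[OF M(2)] by blast
    then show ?thesis
      using fan_in_primeXminus[OF M(1)] by simp
  next
    case 2
    then have "B' \<in> PM (M - 2)"
      by (simp add: mem_primeXminus_iff)
    then show ?thesis
      using Ik_in_primeXminus_iff 2 by simp
  qed
qed

theorem theorem4p7:
  fixes N :: nat
  assumes "odd N" and "N \<ge> 3"
  shows "primeXminus N = sharpX N"
  using assms
proof (induction N rule: less_induct)
  case (less N)
  show ?case
  proof (cases "N = 3")
    case True
    have "primePr 3 = {{{2, 3}}}"
      by (auto simp: primePr_def)
    then show ?thesis
      using primeXminus_recursion[of 3] primeXminus_1 True by (simp add: sharpX.simps)
  next
    case False
    then have "5 \<le> N"
      using less.prems by presburger
    then have "primeXminus (N - 2) = sharpX (N - 2)"
      using less.IH[of "N - 2"] less.prems by simp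
    moreover have "sharpX N = primePr N \<union> {Ik k B' | k B'. k \<in> {1..N - 2} \<and> B' \<in> sharpX (N - 2)}"
      using \<open>5 \<le> N\<close> by (subst sharpX.simps) simp
    ultimately show ?thesis
      using primeXminus_recursion[OF less.prems] by simp
  qed
qed

end
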